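(* If $f\colon[a,b]\to\mathbb{R}$ is Laplace integrable on $[a,b]$, then $f$ is Lebesgue measurable.
   Context: Laplace derivates: for $F$ Perron integrable near $x$, $\underline{LD}_1F(x)$ and $\overline{LD}_1F(x)$ are the minimum of the $\liminf$'s, resp. maximum of the $\limsup$'s, as $s\to\infty$ of $s^2\int_0^\delta e^{-st}[F(x+t)-F(x)]dt$ and $(-s^2)\int_0^\delta e^{-st}[F(x-t)-F(x)]dt$, $\delta>0$ fixed (independent of $\delta$; one-sided at endpoints). A major function of $f$ is a continuous $U$ on $[a,b]$ with $\underline{LD}_1U\geqslant f$ and $\underline{LD}_1U>-\infty$ everywhere; a minor function is a continuous $V$ with $\overline{LD}_1V\leqslant f$ and $\overline{LD}_1V<\infty$ everywhere; $f$ is Laplace integrable if $\sup_V(V(b)-V(a))=\inf_U(U(b)-U(a))$ is finite. *)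

theory Defs
  imports "HOL-Analysis.Analysis"
begin

definition laplace_right :: "(real \<Rightarrow> real) \<Rightarrow> real \<Rightarrow> real \<Rightarrow> real \<Rightarrow> real" where
  "laplace_right F x \<delta> s = s\<^sup>2 * integral {0..\<delta>} (\<lambda>t. exp (- s * t) * (F (x + t) - F x))"

definition laplace_left :: "(real \<Rightarrow> real) \<Rightarrow> real \<Rightarrow> real \<Rightarrow> real \<Rightarrow> real" where
  "laplace_left F x \<delta> s = - (s\<^sup>2) * integral {0..\<delta>} (\<lambda>t. exp (- s * t) * (F (x - t) - F x))"

text \<open>Lower and upper Laplace derivates of F at x relative to [a,b]:
  one-sided at the endpoints; the fixed \<delta> is b - x (right) and x - a (left),
  so that only values of F on [a,b] are used.\<close>

definition lower_LD :: "real \<Rightarrow> real \<Rightarrow> (real \<Rightarrow> real) \<Rightarrow> real \<Rightarrow> ereal" where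
  "lower_LD a b F x =
     (if x = a then Liminf at_top (\<lambda>s. ereal (laplace_right F x (b - x) s))
      else if x = b then Liminf at_top (\<lambda>s. ereal (laplace_left F x (x - a) s))
      else min (Liminf at_top (\<lambda>s. ereal (laplace_right F x (b - x) s)))
               (Liminf at_top (\<lambda>s. ereal (laplace_left F x (x - a) s))))"

definition upper_LD :: "real \<Rightarrow> real \<Rightarrow> (real \<Rightarrow> real) \<Rightarrow> real \<Rightarrow> ereal" where
  "upper_LD a b F x =
     (if x = a then Limsup at_top (\<lambda>s. ereal (laplace_right F x (b - x) s))
      else if x = b then Limsup at_top (\<lambda>s. ereal (laplace_left F x (x - a) s))
      else max (Limsup at_top (\<lambda>s. ereal (laplace_right F x (b - x) s)))
               (Limsup at_top (\<lambda>s. ereal (laplace_left F x (x - a) s))))"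

definition laplace_major :: "real \<Rightarrow> real \<Rightarrow> (real \<Rightarrow> real) \<Rightarrow> (real \<Rightarrow> real) \<Rightarrow> bool" where
  "laplace_major a b f U \<longleftrightarrow> continuous_on {a..b} U \<and>
     (\<forall>x\<in>{a..b}. lower_LD a b U x \<ge> ereal (f x) \<and> lower_LD a b U x > -\<infinity>)"

definition laplace_minor :: "real \<Rightarrow> real \<Rightarrow> (real \<Rightarrow> real) \<Rightarrow> (real \<Rightarrow> real) \<Rightarrow> bool" where
  "laplace_minor a b f V \<longleftrightarrow> continuous_on {a..b} V \<and>
     (\<forall>x\<in>{a..b}. upper_LD a b V x \<le> ereal (f x) \<and> upper_LD a b V x < \<infinity>)"

definition laplace_integrable :: "(real \<Rightarrow> real) \<Rightarrow> real \<Rightarrow> real \<Rightarrow> bool" where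
  "laplace_integrable f a b \<longleftrightarrow>
     (let lo = Sup {ereal (V b - V a) | V. laplace_minor a b f V};
          up = Inf {ereal (U b - U a) | U. laplace_major a b f U}
      in lo = up \<and> \<bar>lo\<bar> \<noteq> \<infinity>)"

end

theory Submission
  imports Defs "HOL-Real_Asymp.Real_Asymp"
begin

(* Choose majors U n and minors V n whose increments over [a, b] differ by less than 1 / (n + 1).
   The lower right Laplace derivate of W n = U n - V n is nonnegative, and a continuous function
   with this property is nondecreasing: at a point of [a, b) where it attains a maximum over some
   interval to the right, its right Laplace expressions have nonpositive limsup.  Let G be the
   supremum over n of the limsup of the right Laplace expressions of V n along s = 1, 2, ...;
   restricting to integer s makes G Borel measurable.  Then G <= f on [a, b), while f - G is
   dominated, for every n, by the liminf of the right Laplace expressions of W n (extended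
   constantly beyond b).  By Fatou's lemma and Fubini's theorem the integral of that liminf is at
   most W n b - W n a < 1 / (n + 1), so f = G almost everywhere. *)

section \<open>The right Laplace expression\<close>

lemma laplace_right_cong:
  assumes "\<And>y. y \<in> {x..x+\<delta>} \<Longrightarrow> F y = G y"
  shows "laplace_right F x \<delta> s = laplace_right G x \<delta> s"
proof -
  have "integral {0..\<delta>} (\<lambda>t. exp (- s * t) * (F (x + t) - F x)) =
      integral {0..\<delta>} (\<lambda>t. exp (- s * t) * (G (x + t) - G x))"
    by (rule integral_cong) (use assms in auto)
  then show ?thesis
    by (simp add: laplace_right_def)
qed

lemma laplace_right_integrable:
  fixes F :: "real \<Rightarrow> real"
  assumes "continuous_on {x..x+\<delta>} F"
  shows "(\<lambda>t. exp (- s * t) * (F (x + t) - F x)) integrable_on {0..\<delta>}"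
proof (rule integrable_continuous_interval)
  have "continuous_on {0..\<delta>} (\<lambda>t. F (x + t))"
    by (rule continuous_on_compose2[OF assms]) (auto intro!: continuous_intros)
  then show "continuous_on {0..\<delta>} (\<lambda>t. exp (- s * t) * (F (x + t) - F x))"
    by (intro continuous_intros)
qed

lemma laplace_right_add:
  assumes "continuous_on {x..x+\<delta>} F" and "continuous_on {x..x+\<delta>} G"
  shows "laplace_right (\<lambda>y. F y + G y) x \<delta> s = laplace_right F x \<delta> s + laplace_right G x \<delta> s"
proof -
  have "integral {0..\<delta>} (\<lambda>t. exp (- s * t) * (F (x + t) + G (x + t) - (F x + G x))) =
      integral {0..\<delta>} (\<lambda>t. exp (- s * t) * (F (x + t) - F x) + exp (- s * t) * (G (x + t) - G x))"
    by (simp add: algebra_simps)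
  also have "\<dots> = integral {0..\<delta>} (\<lambda>t. exp (- s * t) * (F (x + t) - F x)) +
      integral {0..\<delta>} (\<lambda>t. exp (- s * t) * (G (x + t) - G x))"
    by (intro integral_add laplace_right_integrable assms)
  finally show ?thesis
    unfolding laplace_right_def by (simp only: distrib_left)
qed

lemma laplace_right_diff:
  assumes "continuous_on {x..x+\<delta>} F" and "continuous_on {x..x+\<delta>} G"
  shows "laplace_right (\<lambda>y. F y - G y) x \<delta> s = laplace_right F x \<delta> s - laplace_right G x \<delta> s"
proof -
  have "integral {0..\<delta>} (\<lambda>t. exp (- s * t) * (F (x + t) - G (x + t) - (F x - G x))) =
      integral {0..\<delta>} (\<lambda>t. exp (- s * t) * (F (x + t) - F x) - exp (- s * t) * (G (x + t) - G x))"
    by (simp add: algebra_simps)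
  also have "\<dots> = integral {0..\<delta>} (\<lambda>t. exp (- s * t) * (F (x + t) - F x)) -
      integral {0..\<delta>} (\<lambda>t. exp (- s * t) * (G (x + t) - G x))"
    by (intro integral_diff laplace_right_integrable assms)
  finally show ?thesis
    unfolding laplace_right_def by (simp only: right_diff_distrib)
qed

lemma laplace_right_cmult: "laplace_right (\<lambda>y. c * F y) x \<delta> s = c * laplace_right F x \<delta> s"
proof -
  have "(\<lambda>t. exp (- s * t) * (c * F (x + t) - c * F x)) = (\<lambda>t. c * (exp (- s * t) * (F (x + t) - F x)))"
    by (simp add: algebra_simps)
  then show ?thesis
    by (simp add: laplace_right_def)
qed

lemma laplace_right_nonneg:
  fixes F :: "real \<Rightarrow> real"
  assumes "continuous_on {x..x+\<delta>} F" and "mono_on {x..x+\<delta>} F"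
  shows "0 \<le> laplace_right F x \<delta> s"
  unfolding laplace_right_def
proof (rule mult_nonneg_nonneg[OF zero_le_power2], rule integral_nonneg[OF laplace_right_integrable[OF assms(1)]])
  fix t assume "t \<in> {0..\<delta>}"
  then have "F x \<le> F (x + t)"
    by (intro mono_onD[OF assms(2)]) auto
  then show "0 \<le> exp (- s * t) * (F (x + t) - F x)"
    by simp
qed

lemma laplace_right_mono_window:
  assumes cont: "continuous_on {x..x+\<delta>'} F" and mono: "mono_on {x..x+\<delta>'} F"
    and "0 \<le> \<delta>" "\<delta> \<le> \<delta>'"
  shows "laplace_right F x \<delta> s \<le> laplace_right F x \<delta>' s"
proof -
  let ?g = "\<lambda>t. exp (- s * t) * (F (x + t) - F x)"
  have int: "?g integrable_on {0..\<delta>'}"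
    by (rule laplace_right_integrable[OF cont])
  have "integral {0..\<delta>} ?g + integral {\<delta>..\<delta>'} ?g = integral {0..\<delta>'} ?g"
    by (rule Henstock_Kurzweil_Integration.integral_combine) (use assms int in auto)
  moreover have "0 \<le> integral {\<delta>..\<delta>'} ?g"
  proof (rule integral_nonneg)
    show "?g integrable_on {\<delta>..\<delta>'}"
      by (rule integrable_subinterval_real[OF int]) (use assms in auto)
    show "0 \<le> ?g t" if "t \<in> {\<delta>..\<delta>'}" for t
    proof -
      have "F x \<le> F (x + t)"
        by (rule mono_onD[OF mono]) (use that assms in auto)
      then show ?thesis
        by simp
    qed
  qed
  ultimately have "integral {0..\<delta>} ?g \<le> integral {0..\<delta>'} ?g"
    by linarith
  then show ?thesis
    unfolding laplace_right_def by (rule mult_left_mono) simp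
qed

lemma laplace_right_ident:
  assumes "s > 0" and "\<delta> \<ge> 0"
  shows "laplace_right (\<lambda>y. y) x \<delta> s = 1 - exp (- s * \<delta>) * (1 + s * \<delta>)"
proof -
  define \<phi> where "\<phi> t = - exp (- s * t) * (s * t + 1) / s\<^sup>2" for t
  have "(\<phi> has_real_derivative exp (- s * t) * t) (at t)" for t
    unfolding \<phi>_def using assms(1)
    by (auto intro!: derivative_eq_intros simp: field_simps power2_eq_square)
  then have "((\<lambda>t. exp (- s * t) * t) has_integral \<phi> \<delta> - \<phi> 0) {0..\<delta>}"
    using assms(2)
    by (intro fundamental_theorem_of_calculus)
       (auto simp: has_real_derivative_iff_has_vector_derivative[symmetric] intro: has_field_derivative_at_within)
  then show ?thesis
    using assms(1) by (simp add: laplace_right_def integral_unique \<phi>_def field_simps)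
qed

lemma laplace_right_ident_tendsto:
  assumes "\<delta> > 0"
  shows "((\<lambda>s. laplace_right (\<lambda>y. y) x \<delta> s) \<longlongrightarrow> 1) at_top"
proof -
  have "((\<lambda>s. 1 - exp (- s * \<delta>) * (1 + s * \<delta>)) \<longlongrightarrow> 1) at_top"
    using assms by real_asymp
  moreover have "\<forall>\<^sub>F s in at_top. 1 - exp (- s * \<delta>) * (1 + s * \<delta>) = laplace_right (\<lambda>y. y) x \<delta> s"
    using eventually_gt_at_top[of 0] by eventually_elim (use assms in \<open>simp add: laplace_right_ident\<close>)
  ultimately show ?thesis
    by (rule Lim_transform_eventually)
qed

lemma laplace_right_ident_le_1:
  assumes "s \<ge> 0" and "\<delta> \<ge> 0"
  shows "laplace_right (\<lambda>y. y) x \<delta> s \<le> 1"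
proof (cases "s = 0")
  case False
  with assms show ?thesis
    by (simp add: laplace_right_ident)
qed (simp add: laplace_right_def)

lemma continuous_on_laplace_right:
  fixes G :: "real \<Rightarrow> real"
  assumes "continuous_on UNIV G"
  shows "continuous_on UNIV (\<lambda>x. laplace_right G x \<delta> s)"
proof -
  have "continuous_on (UNIV \<times> cbox 0 \<delta>) (\<lambda>(x, t). exp (- s * t) * (G (x + t) - G x))"
    by (auto simp: split_beta intro!: continuous_intros continuous_on_compose2[OF assms])
  then have "continuous_on UNIV (\<lambda>x. integral (cbox 0 \<delta>) (\<lambda>t. exp (- s * t) * (G (x + t) - G x)))"
    by (rule integral_continuous_on_param)
  then show ?thesis
    unfolding laplace_right_def by (intro continuous_intros) simp
qed

lemma integral_Icc_rescale:
  fixes g :: "real \<Rightarrow> real"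
  assumes "\<delta> \<ge> 0" and "g integrable_on {0..\<delta>}"
  shows "integral {0..\<delta>} g = \<delta> * integral {0..1} (\<lambda>u. g (\<delta> * u))"
proof (cases "\<delta> = 0")
  case False
  with assms have "\<delta> > 0" by simp
  have "(g has_integral integral {0..\<delta>} g) (cbox 0 \<delta>)"
    using assms(2) by (simp add: integrable_integral)
  from has_integral_affinity'[OF this \<open>\<delta> > 0\<close>, of 0]
  have "((\<lambda>u. g (\<delta> * u)) has_integral (integral {0..\<delta>} g / \<delta>)) {0..1}"
    using \<open>\<delta> > 0\<close> by (simp add: divide_simps)
  then show ?thesis
    using \<open>\<delta> > 0\<close> by (simp add: integral_unique)
qed simp

text \<open>The window \<open>b - x\<close> moves with \<open>x\<close>; rescaling it to \<open>[0, 1]\<close> reduces continuity to that of a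
  parametric integral over a fixed interval.\<close>

lemma continuous_on_laplace_right_to_endpoint:
  fixes F :: "real \<Rightarrow> real"
  assumes cont: "continuous_on {a..b} F"
  shows "continuous_on {a..b} (\<lambda>x. laplace_right F x (b - x) s)"
proof -
  let ?h = "\<lambda>x u. exp (- s * ((b - x) * u)) * (F (x + (b - x) * u) - F x)"
  have in_ab: "a \<le> x + (b - x) * u \<and> x + (b - x) * u \<le> b"
    if "a \<le> x" "x \<le> b" "0 \<le> u" "u \<le> 1" for x u
  proof -
    have "0 \<le> (b - x) * u" "(b - x) * u \<le> b - x"
      using that by (simp_all add: mult_left_le)
    then show ?thesis
      using that by linarith
  qed
  have "continuous_on ({a..b} \<times> cbox 0 1) (\<lambda>(x, u). ?h x u)"
    by (auto simp: split_beta in_ab intro!: continuous_intros continuous_on_compose2[OF cont])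
  then have "continuous_on {a..b} (\<lambda>x. s\<^sup>2 * ((b - x) * integral (cbox 0 1) (?h x)))"
    by (intro continuous_intros integral_continuous_on_param)
  moreover have "laplace_right F x (b - x) s = s\<^sup>2 * ((b - x) * integral (cbox 0 1) (?h x))"
    if "x \<in> {a..b}" for x
  proof -
    have "continuous_on {x..x + (b - x)} F"
      using that by (auto intro: continuous_on_subset[OF cont])
    then have "(\<lambda>t. exp (- s * t) * (F (x + t) - F x)) integrable_on {0..b - x}"
      by (rule laplace_right_integrable)
    then show ?thesis
      using that unfolding laplace_right_def by (subst integral_Icc_rescale) auto
  qed
  ultimately show ?thesis
    by (metis (no_types, lifting) continuous_on_eq)
qed

section \<open>Monotonicity from the right Laplace derivate\<close>

lemma laplace_right_le_at_local_max:
  fixes F :: "real \<Rightarrow> real"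
  assumes cont: "continuous_on {x..x+\<delta>} F" and d: "x < d" "d \<le> x + \<delta>"
    and max: "\<And>y. y \<in> {x..d} \<Longrightarrow> F y \<le> F x"
    and M: "\<And>y. y \<in> {x..x+\<delta>} \<Longrightarrow> \<bar>F y\<bar> \<le> M" and "s \<ge> 0"
  shows "laplace_right F x \<delta> s \<le> s\<^sup>2 * exp (- s * (d - x)) * (\<delta> * (2 * M))"
proof -
  have "M \<ge> 0"
    using M[of x] d by auto
  have "integral {0..\<delta>} (\<lambda>t. exp (- s * t) * (F (x + t) - F x)) \<le>
      integral {0..\<delta>} (\<lambda>t. exp (- s * (d - x)) * (2 * M))"
  proof (rule integral_le[OF laplace_right_integrable[OF cont]])
    fix t assume t: "t \<in> {0..\<delta>}"
    show "exp (- s * t) * (F (x + t) - F x) \<le> exp (- s * (d - x)) * (2 * M)"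
    proof (cases "x + t \<le> d")
      case True
      then have "exp (- s * t) * (F (x + t) - F x) \<le> 0"
        using max[of "x + t"] t by (simp add: mult_nonneg_nonpos)
      also have "\<dots> \<le> exp (- s * (d - x)) * (2 * M)"
        using \<open>M \<ge> 0\<close> by simp
      finally show ?thesis .
    next
      case False
      have "exp (- s * t) * (F (x + t) - F x) \<le> exp (- s * t) * (2 * M)"
        using M[of x] M[of "x + t"] t d by (intro mult_left_mono) auto
      also have "\<dots> \<le> exp (- s * (d - x)) * (2 * M)"
        using False \<open>s \<ge> 0\<close> \<open>M \<ge> 0\<close> by (intro mult_right_mono) (auto intro: mult_left_mono)
      finally show ?thesis .
    qed
  qed (rule integrable_const_ivl)
  also have "\<dots> = \<delta> * (exp (- s * (d - x)) * (2 * M))"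
    using d by simp
  finally have "s\<^sup>2 * integral {0..\<delta>} (\<lambda>t. exp (- s * t) * (F (x + t) - F x)) \<le>
      s\<^sup>2 * (\<delta> * (exp (- s * (d - x)) * (2 * M)))"
    by (rule mult_left_mono) simp
  then show ?thesis
    by (simp add: laplace_right_def mult_ac)
qed

lemma Limsup_laplace_right_nonpos_at_local_max:
  fixes F :: "real \<Rightarrow> real"
  assumes cont: "continuous_on {x..x+\<delta>} F" and d: "x < d" "d \<le> x + \<delta>"
    and max: "\<And>y. y \<in> {x..d} \<Longrightarrow> F y \<le> F x"
  shows "Limsup at_top (\<lambda>s. ereal (laplace_right F x \<delta> s)) \<le> 0"
proof -
  obtain M where M: "\<And>y. y \<in> {x..x+\<delta>} \<Longrightarrow> \<bar>F y\<bar> \<le> M"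
    using compact_imp_bounded[OF compact_continuous_image[OF cont compact_Icc]]
    by (force simp: bounded_iff)
  define B where "B s = s\<^sup>2 * exp (- s * (d - x)) * (\<delta> * (2 * M))" for s
  have "((\<lambda>s. s\<^sup>2 * exp (- s * (d - x))) \<longlongrightarrow> 0) at_top"
    using d by real_asymp
  then have "(B \<longlongrightarrow> 0) at_top"
    unfolding B_def by (rule tendsto_mult_left_zero)
  have "\<forall>\<^sub>F s in at_top. laplace_right F x \<delta> s \<le> B s"
    using eventually_ge_at_top[of 0] unfolding B_def
    by eventually_elim (rule laplace_right_le_at_local_max[OF cont d max M])
  then have "\<forall>\<^sub>F s in at_top. ereal (laplace_right F x \<delta> s) \<le> ereal (B s)"
    by simp
  then have "Limsup at_top (\<lambda>s. ereal (laplace_right F x \<delta> s)) \<le> Limsup at_top (\<lambda>s. ereal (B s))"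
    by (rule Limsup_mono)
  also have "\<dots> = 0"
    using \<open>(B \<longlongrightarrow> 0) at_top\<close> by (simp add: lim_imp_Limsup zero_ereal_def)
  finally show ?thesis .
qed

lemma strict_mono_on_if_Liminf_laplace_right_pos:
  fixes F :: "real \<Rightarrow> real"
  assumes cont: "continuous_on {a..b} F"
    and pos: "\<And>x. x \<in> {a..<b} \<Longrightarrow> 0 < Liminf at_top (\<lambda>s. ereal (laplace_right F x (b - x) s))"
  shows "strict_mono_on {a..b} F"
proof (rule strict_mono_onI, rule ccontr)
  fix c d assume cd: "c \<in> {a..b}" "d \<in> {a..b}" "c < d" and "\<not> F c < F d"
  obtain x where x: "x \<in> {c..<d}" and x_max: "\<And>y. y \<in> {c..d} \<Longrightarrow> F y \<le> F x"
  proof -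
    obtain x0 where x0: "x0 \<in> {c..d}" "\<And>y. y \<in> {c..d} \<Longrightarrow> F y \<le> F x0"
      using continuous_attains_sup[of "{c..d}" F] continuous_on_subset[OF cont] cd by auto
    show ?thesis
    proof (cases "x0 = d")
      case True
      then show ?thesis
        using that[of c] x0 \<open>c < d\<close> \<open>\<not> F c < F d\<close> by force
    qed (use that[of x0] x0 in auto)
  qed
  have "Limsup at_top (\<lambda>s. ereal (laplace_right F x (b - x) s)) \<le> 0"
    by (rule Limsup_laplace_right_nonpos_at_local_max[where d = d])
       (use x x_max cd in \<open>auto intro: continuous_on_subset[OF cont]\<close>)
  moreover have "0 < Liminf at_top (\<lambda>s. ereal (laplace_right F x (b - x) s))"
    using pos x cd by auto
  moreover have "Liminf at_top (\<lambda>s. ereal (laplace_right F x (b - x) s)) \<le>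
      Limsup at_top (\<lambda>s. ereal (laplace_right F x (b - x) s))"
    by (rule Liminf_le_Limsup) simp
  ultimately show False
    by simp
qed

lemma Liminf_laplace_right_add_linear_pos:
  fixes F :: "real \<Rightarrow> real"
  assumes cont: "continuous_on {x..x+\<delta>} F" and "\<delta> > 0" "e > 0"
    and nonneg: "0 \<le> Liminf at_top (\<lambda>s. ereal (laplace_right F x \<delta> s))"
  shows "0 < Liminf at_top (\<lambda>s. ereal (laplace_right (\<lambda>y. F y + e * y) x \<delta> s))"
proof -
  let ?L = "\<lambda>H s. ereal (laplace_right H x \<delta> s)"
  have L_add: "laplace_right (\<lambda>y. F y + e * y) x \<delta> s = laplace_right F x \<delta> s + e * laplace_right (\<lambda>y. y) x \<delta> s"
    for s
    using laplace_right_add[OF cont, of "\<lambda>y. e * y"] laplace_right_cmult[of e "\<lambda>y. y"]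
    by (simp add: continuous_intros)
  have "((\<lambda>s. e * laplace_right (\<lambda>y. y) x \<delta> s) \<longlongrightarrow> e * 1) at_top"
    using \<open>\<delta> > 0\<close> by (intro tendsto_mult_left laplace_right_ident_tendsto)
  then have "\<forall>\<^sub>F s in at_top. e / 2 < e * laplace_right (\<lambda>y. y) x \<delta> s"
    using \<open>e > 0\<close> by (intro order_tendstoD(1)) auto
  then have ev: "\<forall>\<^sub>F s in at_top. ?L F s + ereal (e / 2) \<le> ?L (\<lambda>y. F y + e * y) s"
    by eventually_elim (simp add: L_add)
  have "0 < ereal (e / 2)"
    using \<open>e > 0\<close> by simp
  also have "\<dots> = 0 + ereal (e / 2)"
    by simp
  also have "\<dots> \<le> Liminf at_top (?L F) + ereal (e / 2)"
    using nonneg by (rule add_right_mono)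
  also have "\<dots> = Liminf at_top (\<lambda>s. ?L F s + ereal (e / 2))"
    by (rule Liminf_add_ereal_right[symmetric]) simp_all
  also have "\<dots> \<le> Liminf at_top (?L (\<lambda>y. F y + e * y))"
    using ev by (rule Liminf_mono)
  finally show ?thesis .
qed

text \<open>If \<open>F d < F c\<close> with \<open>c < d\<close>, adding the linear function of slope \<open>(F c - F d) / (d - c)\<close>
  makes the derivate positive, hence the sum strictly increasing, yet equal at \<open>c\<close> and \<open>d\<close>.\<close>

lemma mono_on_if_Liminf_laplace_right_nonneg:
  fixes F :: "real \<Rightarrow> real"
  assumes cont: "continuous_on {a..b} F"
    and nonneg: "\<And>x. x \<in> {a..<b} \<Longrightarrow> 0 \<le> Liminf at_top (\<lambda>s. ereal (laplace_right F x (b - x) s))"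
  shows "mono_on {a..b} F"
proof (rule mono_onI, rule ccontr)
  fix c d assume cd: "c \<in> {a..b}" "d \<in> {a..b}" "c \<le> d" and "\<not> F c \<le> F d"
  then have "c < d"
    by (cases "c = d") auto
  define e where "e = (F c - F d) / (d - c)"
  have "e > 0"
    using \<open>\<not> F c \<le> F d\<close> \<open>c < d\<close> by (simp add: e_def)
  have "strict_mono_on {a..b} (\<lambda>y. F y + e * y)"
  proof (rule strict_mono_on_if_Liminf_laplace_right_pos)
    show "continuous_on {a..b} (\<lambda>y. F y + e * y)"
      by (intro continuous_intros cont)
    fix x assume x: "x \<in> {a..<b}"
    show "0 < Liminf at_top (\<lambda>s. ereal (laplace_right (\<lambda>y. F y + e * y) x (b - x) s))"
      using x \<open>e > 0\<close> nonneg[OF x]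
      by (intro Liminf_laplace_right_add_linear_pos) (auto intro: continuous_on_subset[OF cont])
  qed
  then have "F c + e * c < F d + e * d"
    using cd(1,2) \<open>c < d\<close> by (rule strict_mono_onD)
  moreover have "e * (d - c) = F c - F d"
    using \<open>c < d\<close> by (simp add: e_def)
  ultimately show False
    by (simp add: algebra_simps)
qed

lemma Liminf_laplace_right_major:
  assumes "laplace_major a b f U" and "x \<in> {a..<b}"
  shows "ereal (f x) \<le> Liminf at_top (\<lambda>s. ereal (laplace_right U x (b - x) s))"
  using assms unfolding laplace_major_def lower_LD_def by (auto split: if_splits)

lemma Limsup_laplace_right_minor:
  assumes "laplace_minor a b f V" and "x \<in> {a..<b}"
  shows "Limsup at_top (\<lambda>s. ereal (laplace_right V x (b - x) s)) \<le> ereal (f x)"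
  using assms unfolding laplace_minor_def upper_LD_def by (auto split: if_splits)

lemma ereal_diff_le_Liminf_diff:
  fixes u v :: "'a \<Rightarrow> real"
  assumes u: "ereal c \<le> Liminf F (\<lambda>s. ereal (u s))" and v: "Limsup F (\<lambda>s. ereal (v s)) \<le> ereal d"
  shows "ereal (c - d) \<le> Liminf F (\<lambda>s. ereal (u s - v s))"
  unfolding le_Liminf_iff
proof (intro allI impI)
  fix y assume "y < ereal (c - d)"
  then obtain r where r: "y < ereal r" "r < c - d"
    using ereal_dense2 by force
  define \<epsilon> where "\<epsilon> = (c - d - r) / 2"
  have "\<epsilon> > 0"
    using r by (simp add: \<epsilon>_def)
  have "\<forall>\<^sub>F s in F. ereal (c - \<epsilon>) < ereal (u s)"
    by (rule less_LiminfD, rule order.strict_trans2[OF _ u]) (use \<open>\<epsilon> > 0\<close> in simp)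
  moreover have "\<forall>\<^sub>F s in F. ereal (v s) < ereal (d + \<epsilon>)"
    by (rule Limsup_lessD, rule order.strict_trans1[OF v]) (use \<open>\<epsilon> > 0\<close> in simp)
  ultimately show "\<forall>\<^sub>F s in F. y < ereal (u s - v s)"
  proof eventually_elim
    case (elim s)
    then have "c - \<epsilon> < u s" "v s < d + \<epsilon>"
      by simp_all
    then have "ereal r < ereal (u s - v s)"
      by (simp add: \<epsilon>_def field_simps)
    with r(1) show ?case
      by (rule order.strict_trans)
  qed
qed

lemma mono_on_laplace_major_minus_minor:
  assumes U: "laplace_major a b f U" and V: "laplace_minor a b f V"
  shows "mono_on {a..b} (\<lambda>y. U y - V y)"
proof (rule mono_on_if_Liminf_laplace_right_nonneg)
  have Uc: "continuous_on {a..b} U" and Vc: "continuous_on {a..b} V"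
    using U V unfolding laplace_major_def laplace_minor_def by auto
  then show "continuous_on {a..b} (\<lambda>y. U y - V y)"
    by (intro continuous_intros)
  fix x assume x: "x \<in> {a..<b}"
  have "ereal (f x - f x) \<le>
      Liminf at_top (\<lambda>s. ereal (laplace_right U x (b - x) s - laplace_right V x (b - x) s))"
    by (intro ereal_diff_le_Liminf_diff Liminf_laplace_right_major[OF U x] Limsup_laplace_right_minor[OF V x])
  moreover have "laplace_right (\<lambda>y. U y - V y) x (b - x) s =
      laplace_right U x (b - x) s - laplace_right V x (b - x) s" for s
    using x by (intro laplace_right_diff) (auto intro: continuous_on_subset[OF Uc] continuous_on_subset[OF Vc])
  ultimately show "0 \<le> Liminf at_top (\<lambda>s. ereal (laplace_right (\<lambda>y. U y - V y) x (b - x) s))"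
    by (simp add: zero_ereal_def)
qed

section \<open>Integrating the right Laplace expression\<close>

lemma integral_shift_diff_le:
  fixes G :: "real \<Rightarrow> real"
  assumes mono: "mono G" and cont: "continuous_on UNIV G" and "a \<le> b" "t \<ge> 0"
  shows "integral {a..b} (\<lambda>x. G (x + t) - G x) \<le> t * (G (b + t) - G a)"
proof -
  have int: "G integrable_on {p..q}" for p q
    by (rule integrable_continuous_interval) (use cont continuous_on_subset in blast)
  have "integral {a..b} (\<lambda>x. G (x + t)) = integral {a+t..b+t} G"
    using integral_shift_Icc_real[of a b G t] by (simp add: comp_def add.commute)
  moreover have "integral {a..a+t} G + integral {a+t..b+t} G = integral {a..b} G + integral {b..b+t} G"
    using assms int
    by (simp add: Henstock_Kurzweil_Integration.integral_combine)
  moreover have "integral {b..b+t} G \<le> integral {b..b+t} (\<lambda>_. G (b + t))"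
    by (rule integral_le) (use int assms in \<open>auto intro: monoD\<close>)
  moreover have "integral {a..a+t} (\<lambda>_. G a) \<le> integral {a..a+t} G"
    by (rule integral_le) (use int assms in \<open>auto intro: monoD\<close>)
  moreover have "(\<lambda>x. G x) integrable_on {a..b}" "(\<lambda>x. G (x + t)) integrable_on {a..b}"
    by (intro integrable_continuous_interval continuous_on_compose2[OF cont] continuous_intros; simp)+
  ultimately show ?thesis
    using \<open>t \<ge> 0\<close> by (simp add: integral_diff algebra_simps)
qed

lemma integral_laplace_right_swap:
  fixes G :: "real \<Rightarrow> real"
  assumes cont: "continuous_on UNIV G"
  shows "integral {a..b} (\<lambda>x. laplace_right G x \<delta> s) =
    s\<^sup>2 * integral {0..\<delta>} (\<lambda>t. exp (- s * t) * integral {a..b} (\<lambda>x. G (x + t) - G x))"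
proof -
  let ?g = "\<lambda>x t. exp (- s * t) * (G (x + t) - G x)"
  have "continuous_on (cbox (a, 0) (b, \<delta>)) (\<lambda>(x, t). ?g x t)"
    by (auto simp: split_beta intro!: continuous_intros continuous_on_compose2[OF cont])
  then have "integral {a..b} (\<lambda>x. integral {0..\<delta>} (?g x)) = integral {0..\<delta>} (\<lambda>t. integral {a..b} (\<lambda>x. ?g x t))"
    by (rule integral_swap_continuous[of a 0 b \<delta>, unfolded box_real])
  moreover have "(\<lambda>x. G (x + t) - G x) integrable_on {a..b}" for t
    by (intro integrable_continuous_interval continuous_intros continuous_on_compose2[OF cont]) auto
  ultimately show ?thesis
    by (simp add: laplace_right_def)
qed

lemma integral_laplace_right_le:
  fixes G :: "real \<Rightarrow> real"
  assumes mono: "mono G" and cont: "continuous_on UNIV G" and "a \<le> b" "\<delta> \<ge> 0" "s \<ge> 0"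
  shows "integral {a..b} (\<lambda>x. laplace_right G x \<delta> s) \<le> G (b + \<delta>) - G a"
proof -
  let ?c = "G (b + \<delta>) - G a"
  have "integral {0..\<delta>} (\<lambda>t. exp (- s * t) * integral {a..b} (\<lambda>x. G (x + t) - G x)) \<le>
      integral {0..\<delta>} (\<lambda>t. exp (- s * t) * t * ?c)"
  proof (rule integral_le)
    have "continuous_on ({0..\<delta>} \<times> cbox a b) (\<lambda>(t, x). G (x + t) - G x)"
      by (auto simp: split_beta intro!: continuous_intros continuous_on_compose2[OF cont])
    then have "continuous_on {0..\<delta>} (\<lambda>t. integral {a..b} (\<lambda>x. G (x + t) - G x))"
      using integral_continuous_on_param[of "{0..\<delta>}" a b] by (simp only: box_real)
    then show "(\<lambda>t. exp (- s * t) * integral {a..b} (\<lambda>x. G (x + t) - G x)) integrable_on {0..\<delta>}"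
      by (intro integrable_continuous_interval continuous_intros)
    show "(\<lambda>t. exp (- s * t) * t * ?c) integrable_on {0..\<delta>}"
      by (intro integrable_continuous_interval continuous_intros)
    fix t assume t: "t \<in> {0..\<delta>}"
    have "exp (- s * t) * integral {a..b} (\<lambda>x. G (x + t) - G x) \<le> exp (- s * t) * (t * (G (b + t) - G a))"
      using integral_shift_diff_le[OF mono cont \<open>a \<le> b\<close>, of t] t by (intro mult_left_mono) auto
    also have "\<dots> \<le> exp (- s * t) * t * ?c"
      unfolding mult.assoc using t monoD[OF mono, of "b + t" "b + \<delta>"]
      by (intro mult_left_mono) auto
    finally show "exp (- s * t) * integral {a..b} (\<lambda>x. G (x + t) - G x) \<le> exp (- s * t) * t * ?c" .
  qed
  also have "\<dots> = integral {0..\<delta>} (\<lambda>t. exp (- s * t) * t) * ?c"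
    by (rule integral_mult_left)
  finally have "integral {a..b} (\<lambda>x. laplace_right G x \<delta> s) \<le>
      s\<^sup>2 * (integral {0..\<delta>} (\<lambda>t. exp (- s * t) * t) * ?c)"
    unfolding integral_laplace_right_swap[OF cont] by (rule mult_left_mono) simp
  also have "\<dots> = laplace_right (\<lambda>y. y) a \<delta> s * ?c"
    by (simp add: laplace_right_def)
  also have "\<dots> \<le> 1 * ?c"
    using laplace_right_ident_le_1[OF \<open>s \<ge> 0\<close> \<open>\<delta> \<ge> 0\<close>] monoD[OF mono, of a "b + \<delta>"] assms
    by (intro mult_right_mono) auto
  finally show ?thesis
    by simp
qed

lemma clamp_real: "(a::real) \<le> b \<Longrightarrow> clamp a b x = max a (min b x)"
  unfolding clamp_def Basis_real_def by auto

lemma mono_ext_cont: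
  fixes F :: "real \<Rightarrow> real"
  assumes "a \<le> b" and "mono_on {a..b} F"
  shows "mono (ext_cont F a b)"
proof (rule monoI)
  fix x y :: real assume "x \<le> y"
  then show "ext_cont F a b x \<le> ext_cont F a b y"
    using assms by (auto simp: ext_cont_def clamp_real intro!: mono_onD[OF assms(2)])
qed

text \<open>Extending a monotone \<open>W\<close> constantly beyond \<open>[a, b]\<close> allows the window \<open>b - a\<close>, which no
  longer depends on \<open>x\<close>.\<close>

lemma laplace_right_le_ext_cont:
  fixes W :: "real \<Rightarrow> real"
  assumes cont: "continuous_on {a..b} W" and mono: "mono_on {a..b} W" and x: "x \<in> {a..b}"
  shows "laplace_right W x (b - x) s \<le> laplace_right (ext_cont W a b) x (b - a) s"
proof -
  have W_mono: "mono (ext_cont W a b)"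
    using x by (intro mono_ext_cont mono) auto
  have W_cont: "continuous_on UNIV (ext_cont W a b)"
    using cont by (intro continuous_on_ext_cont) simp
  have "laplace_right (ext_cont W a b) x (b - x) s \<le> laplace_right (ext_cont W a b) x (b - a) s"
    using x by (intro laplace_right_mono_window continuous_on_subset[OF W_cont] mono_on_subset[OF W_mono]) auto
  moreover have "laplace_right W x (b - x) s = laplace_right (ext_cont W a b) x (b - x) s"
    using x by (intro laplace_right_cong) simp
  ultimately show ?thesis
    by simp
qed

lemma nn_integral_liminf_laplace_right_le:
  fixes W :: "real \<Rightarrow> real"
  assumes "a \<le> b" and cont: "continuous_on {a..b} W" and mono: "mono_on {a..b} W"
  shows "(\<integral>\<^sup>+x. liminf (\<lambda>k. ennreal (laplace_right (ext_cont W a b) x (b - a) (real (Suc k)))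
      * indicator {a..b} x) \<partial>lborel) \<le> ennreal (W b - W a)"
proof -
  let ?W = "ext_cont W a b"
  let ?Q = "\<lambda>k x. laplace_right ?W x (b - a) (real (Suc k))"
  have W_mono: "mono ?W"
    by (rule mono_ext_cont[OF \<open>a \<le> b\<close> mono])
  have W_cont: "continuous_on UNIV ?W"
    using cont by (intro continuous_on_ext_cont) simp
  have Q_cont: "continuous_on UNIV (?Q k)" for k
    by (rule continuous_on_laplace_right[OF W_cont])
  have [measurable]: "?Q k \<in> borel_measurable borel" for k
    by (rule borel_measurable_continuous_onI[OF Q_cont])
  have "(\<integral>\<^sup>+x. liminf (\<lambda>k. ennreal (?Q k x) * indicator {a..b} x) \<partial>lborel) \<le>
      liminf (\<lambda>k. \<integral>\<^sup>+x. ennreal (?Q k x) * indicator {a..b} x \<partial>lborel)"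
    by (rule nn_integral_liminf) measurable
  also have "\<dots> \<le> ennreal (W b - W a)"
  proof (rule Liminf_le, simp, intro always_eventually allI)
    fix k
    have "?Q k x \<ge> 0" for x
      by (intro laplace_right_nonneg continuous_on_subset[OF W_cont] mono_on_subset[OF W_mono]) auto
    moreover have "(?Q k has_integral integral {a..b} (?Q k)) {a..b}"
      by (intro integrable_integral integrable_continuous_interval continuous_on_subset[OF Q_cont]) simp
    ultimately have "(\<integral>\<^sup>+x. ennreal (?Q k x) * indicator {a..b} x \<partial>lborel) = ennreal (integral {a..b} (?Q k))"
      by (intro nn_integral_has_integral_lebesgue')
    also have "\<dots> \<le> ennreal (W b - W a)"
      using integral_laplace_right_le[OF W_mono W_cont \<open>a \<le> b\<close>, of "b - a" "real (Suc k)"] \<open>a \<le> b\<close>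
      by (intro ennreal_leI) (simp add: ext_cont_def clamp_real)
    finally show "(\<integral>\<^sup>+x. ennreal (?Q k x) * indicator {a..b} x \<partial>lborel) \<le> ennreal (W b - W a)" .
  qed
  finally show ?thesis .
qed

section \<open>Measurability\<close>

lemma AE_INF_eq_0_if_nn_integral_tendsto_0:
  fixes D :: "nat \<Rightarrow> 'a \<Rightarrow> ennreal"
  assumes meas: "\<And>n. D n \<in> borel_measurable M"
    and le: "\<And>n. (\<integral>\<^sup>+x. D n x \<partial>M) \<le> ennreal (e n)" and lim: "e \<longlonglongrightarrow> 0"
  shows "AE x in M. (INF n. D n x) = 0"
proof -
  have "(\<integral>\<^sup>+x. (INF n. D n x) \<partial>M) \<le> ennreal (e n)" for n
    using nn_integral_mono[of M "\<lambda>x. INF n. D n x" "D n"] le[of n] by (auto intro: INF_lower order_trans)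
  moreover have "(\<lambda>n. ennreal (e n)) \<longlonglongrightarrow> ennreal 0"
    using lim by (rule tendsto_ennrealI)
  ultimately have "(\<integral>\<^sup>+x. (INF n. D n x) \<partial>M) \<le> 0"
    by (intro LIMSEQ_le_const) auto
  then show ?thesis
    using meas by (subst nn_integral_0_iff_AE[symmetric]) auto
qed

lemma Liminf_ennreal_eq_e2ennreal:
  fixes q :: "'a \<Rightarrow> real"
  assumes "F \<noteq> bot"
  shows "Liminf F (\<lambda>k. ennreal (q k)) = e2ennreal (Liminf F (\<lambda>k. ereal (q k)))"
proof -
  have "Liminf F (\<lambda>k. e2ennreal (ereal (q k))) = e2ennreal (Liminf F (\<lambda>k. ereal (q k)))"
    using assms by (intro Liminf_compose_continuous_mono continuous_on_e2ennreal monoI e2ennreal_mono)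
  then show ?thesis
    by simp
qed

lemma Liminf_le_Liminf_compose:
  fixes \<phi> :: "'a \<Rightarrow> 'b::complete_linorder"
  assumes "filterlim g G F"
  shows "Liminf G \<phi> \<le> Liminf F (\<lambda>x. \<phi> (g x))"
  unfolding le_Liminf_iff
proof (intro allI impI)
  fix y assume "y < Liminf G \<phi>"
  then have "\<forall>\<^sub>F x in G. y < \<phi> x"
    by (rule less_LiminfD)
  then show "\<forall>\<^sub>F x in F. y < \<phi> (g x)"
    using assms by (rule eventually_compose_filterlim)
qed

lemma Limsup_compose_le_Limsup:
  fixes \<phi> :: "'a \<Rightarrow> 'b::complete_linorder"
  assumes "filterlim g G F"
  shows "Limsup F (\<lambda>x. \<phi> (g x)) \<le> Limsup G \<phi>"
  unfolding Limsup_le_iff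
proof (intro allI impI)
  fix y assume "Limsup G \<phi> < y"
  then have "\<forall>\<^sub>F x in G. \<phi> x < y"
    by (rule Limsup_lessD)
  then show "\<forall>\<^sub>F x in F. \<phi> (g x) < y"
    using assms by (rule eventually_compose_filterlim)
qed

lemma filterlim_real_Suc_sequentially: "filterlim (\<lambda>k. real (Suc k)) at_top sequentially"
  using filterlim_real_sequentially filterlim_sequentially_Suc[of "\<lambda>k. real k"] by simp

lemma ennreal_le_liminf_laplace_right_major_minus_minor:
  assumes U: "laplace_major a b f U" and V: "laplace_minor a b f V" and x: "x \<in> {a..<b}"
    and d: "limsup (\<lambda>k. ereal (laplace_right V x (b - x) (real (Suc k)))) \<le> ereal d"
  shows "ennreal (f x - d) \<le>
    liminf (\<lambda>k. ennreal (laplace_right (ext_cont (\<lambda>y. U y - V y) a b) x (b - a) (real (Suc k))))"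
proof -
  let ?LU = "\<lambda>k. laplace_right U x (b - x) (real (Suc k))"
  let ?LV = "\<lambda>k. laplace_right V x (b - x) (real (Suc k))"
  let ?Q = "\<lambda>k. laplace_right (ext_cont (\<lambda>y. U y - V y) a b) x (b - a) (real (Suc k))"
  have Uc: "continuous_on {a..b} U" and Vc: "continuous_on {a..b} V"
    using U V unfolding laplace_major_def laplace_minor_def by auto
  have "ereal (f x) \<le> liminf (\<lambda>k. ereal (?LU k))"
    using Liminf_laplace_right_major[OF U x]
      Liminf_le_Liminf_compose[OF filterlim_real_Suc_sequentially] by (rule order_trans)
  then have "ereal (f x - d) \<le> liminf (\<lambda>k. ereal (?LU k - ?LV k))"
    using d by (rule ereal_diff_le_Liminf_diff)
  also have "\<dots> \<le> liminf (\<lambda>k. ereal (?Q k))"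
  proof (intro Liminf_mono always_eventually allI)
    fix k
    have "?LU k - ?LV k = laplace_right (\<lambda>y. U y - V y) x (b - x) (real (Suc k))"
      using x by (intro laplace_right_diff[symmetric])
        (auto intro: continuous_on_subset[OF Uc] continuous_on_subset[OF Vc])
    also have "\<dots> \<le> ?Q k"
      using x Uc Vc by (intro laplace_right_le_ext_cont mono_on_laplace_major_minus_minor[OF U V]
          continuous_intros) auto
    finally show "ereal (?LU k - ?LV k) \<le> ereal (?Q k)"
      by simp
  qed
  finally have "e2ennreal (ereal (f x - d)) \<le> e2ennreal (liminf (\<lambda>k. ereal (?Q k)))"
    by (rule e2ennreal_mono)
  then show ?thesis
    by (simp add: Liminf_ennreal_eq_e2ennreal)
qed

lemma SUP_limsup_laplace_right_minor_eq:
  assumes U: "\<And>n. laplace_major a b f (U n)" and V: "\<And>n. laplace_minor a b f (V n)"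
    and x: "x \<in> {a..<b}"
    and INF_0: "(INF n. liminf (\<lambda>k. ennreal
      (laplace_right (ext_cont (\<lambda>y. U n y - V n y) a b) x (b - a) (real (Suc k))))) = 0"
  shows "(SUP n. limsup (\<lambda>k. ereal (laplace_right (V n) x (b - x) (real (Suc k))))) = ereal (f x)"
    (is "?G = _")
proof (rule antisym)
  show "?G \<le> ereal (f x)"
  proof (rule SUP_least)
    fix n
    show "limsup (\<lambda>k. ereal (laplace_right (V n) x (b - x) (real (Suc k)))) \<le> ereal (f x)"
      using Limsup_compose_le_Limsup[OF filterlim_real_Suc_sequentially]
        Limsup_laplace_right_minor[OF V x] by (rule order_trans)
  qed
  show "ereal (f x) \<le> ?G"
  proof (rule ccontr)
    assume "\<not> ereal (f x) \<le> ?G"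
    then have "?G < ereal (f x)"
      by simp
    then obtain d where d: "?G < ereal d" "ereal d < ereal (f x)"
      using ereal_dense2 by blast
    have "ennreal (f x - d) \<le> (INF n. liminf (\<lambda>k. ennreal
        (laplace_right (ext_cont (\<lambda>y. U n y - V n y) a b) x (b - a) (real (Suc k)))))"
    proof (rule INF_greatest, rule ennreal_le_liminf_laplace_right_major_minus_minor[OF U V x])
      fix n
      show "limsup (\<lambda>k. ereal (laplace_right (V n) x (b - x) (real (Suc k)))) \<le> ereal d"
        using SUP_upper[of n UNIV] d(1) by (meson UNIV_I less_imp_le order_trans)
    qed
    with INF_0 d(2) show False
      by simp
  qed
qed

lemma AE_SUP_limsup_laplace_right_minor_eq:
  assumes "a < b" and U: "\<And>n. laplace_major a b f (U n)" and V: "\<And>n. laplace_minor a b f (V n)"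
    and gap: "\<And>n. (U n b - U n a) - (V n b - V n a) \<le> e n" and "e \<longlonglongrightarrow> 0"
  shows "AE x in lborel. x \<in> {a..b} \<longrightarrow>
    (SUP n. limsup (\<lambda>k. ereal (laplace_right (V n) x (b - x) (real (Suc k))))) = ereal (f x)"
proof -
  define W where "W n = (\<lambda>y. U n y - V n y)" for n
  define D where "D n x = liminf (\<lambda>k. ennreal (laplace_right (ext_cont (W n) a b) x (b - a) (real (Suc k)))
    * indicator {a..b} x)" for n x
  have W_cont: "continuous_on {a..b} (W n)" for n
    using U[of n] V[of n] unfolding W_def laplace_major_def laplace_minor_def
    by (auto intro!: continuous_intros)
  have "AE x in lborel. (INF n. D n x) = 0"
  proof (rule AE_INF_eq_0_if_nn_integral_tendsto_0)
    fix n
    have [measurable]: "(\<lambda>x. laplace_right (ext_cont (W n) a b) x (b - a) s) \<in> borel_measurable borel" for s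
      using W_cont by (intro borel_measurable_continuous_onI continuous_on_laplace_right
          continuous_on_ext_cont) simp
    show "D n \<in> borel_measurable lborel"
      unfolding D_def by measurable
    have "(\<integral>\<^sup>+x. D n x \<partial>lborel) \<le> ennreal (W n b - W n a)"
      unfolding D_def using \<open>a < b\<close> W_cont mono_on_laplace_major_minus_minor[OF U[of n] V[of n]]
      by (intro nn_integral_liminf_laplace_right_le) (auto simp: W_def)
    also have "\<dots> \<le> ennreal (e n)"
      using gap[of n] by (intro ennreal_leI) (simp add: W_def)
    finally show "(\<integral>\<^sup>+x. D n x \<partial>lborel) \<le> ennreal (e n)" .
  qed fact
  moreover have "AE x in lborel. x \<noteq> b"
    by (rule AE_lborel_singleton)
  ultimately show ?thesis
  proof eventually_elim
    case (elim x)
    show ?case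
    proof
      assume "x \<in> {a..b}"
      with elim show "(SUP n. limsup (\<lambda>k. ereal (laplace_right (V n) x (b - x) (real (Suc k))))) = ereal (f x)"
        by (intro SUP_limsup_laplace_right_minor_eq[OF U V]) (auto simp: D_def W_def)
    qed
  qed
qed

lemma laplace_integrable_major_minor_close:
  assumes "laplace_integrable f a b" and "e > 0"
  obtains U V where "laplace_major a b f U" "laplace_minor a b f V" "(U b - U a) - (V b - V a) < e"
proof -
  let ?lo = "Sup {ereal (V b - V a) | V. laplace_minor a b f V}"
  let ?up = "Inf {ereal (U b - U a) | U. laplace_major a b f U}"
  obtain I where lo: "?lo = ereal I" and up: "?up = ereal I"
  proof -
    have "?lo = ?up" "\<bar>?lo\<bar> \<noteq> \<infinity>"
      using assms(1) unfolding laplace_integrable_def Let_def by auto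
    then show ?thesis
      by (intro that[of "real_of_ereal ?lo"]) (simp_all add: ereal_real')
  qed
  have "?up < ereal (I + e / 2)"
    using up \<open>e > 0\<close> by simp
  then obtain U where U: "laplace_major a b f U" "U b - U a < I + e / 2"
    unfolding Inf_less_iff by auto
  have "ereal (I - e / 2) < ?lo"
    using lo \<open>e > 0\<close> by simp
  then obtain V where V: "laplace_minor a b f V" "I - e / 2 < V b - V a"
    unfolding less_Sup_iff by auto
  show ?thesis
    using U V by (intro that) auto
qed

lemma borel_measurable_lebesgue_on_if_AE_eq:
  fixes f g :: "'a::euclidean_space \<Rightarrow> real"
  assumes "g \<in> borel_measurable borel" and "AE x in lborel. x \<in> S \<longrightarrow> f x = g x"
    and "S \<in> sets borel"
  shows "f \<in> borel_measurable (lebesgue_on S)"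
proof -
  have "(\<lambda>x. if x \<in> S then g x else 0) \<in> borel_measurable borel"
    using assms(1,3) by measurable
  then have "(\<lambda>x. if x \<in> S then g x else 0) \<in> borel_measurable lebesgue"
    by (intro measurable_completion) simp
  moreover have "AE x in lebesgue. (if x \<in> S then g x else 0) = (if x \<in> S then f x else 0)"
    using AE_completion[OF assms(2)] by eventually_elim simp
  ultimately have "(\<lambda>x. if x \<in> S then f x else 0) \<in> borel_measurable lebesgue"
    by (rule borel_measurable_AE)
  then have "(\<lambda>x. if x \<in> S then f x else 0) \<in> borel_measurable (lebesgue_on S)"
    by (rule measurable_restrict_space1)
  then show ?thesis
    by (rule measurable_lebesgue_cong[THEN iffD1, rotated]) simp
qed

theorem corollary5p6:
  fixes f :: "real \<Rightarrow> real" and a b :: real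
  assumes "a < b"
    and "laplace_integrable f a b"
  shows "f \<in> borel_measurable (lebesgue_on {a..b})"
proof -
  have "\<exists>U V. laplace_major a b f U \<and> laplace_minor a b f V \<and>
      (U b - U a) - (V b - V a) < inverse (real (Suc n))" for n
    by (rule laplace_integrable_major_minor_close[OF assms(2)]) auto
  then obtain U V where U: "\<And>n. laplace_major a b f (U n)" and V: "\<And>n. laplace_minor a b f (V n)"
    and gap: "\<And>n. (U n b - U n a) - (V n b - V n a) < inverse (real (Suc n))"
    by metis
  define g where "g x = real_of_ereal (SUP n. limsup (\<lambda>k. ereal
    (ext_cont (\<lambda>y. laplace_right (V n) y (b - y) (real (Suc k))) a b x)))" for x
  have [measurable]: "ext_cont (\<lambda>y. laplace_right (V n) y (b - y) s) a b \<in> borel_measurable borel" for n s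
    using V[of n] unfolding laplace_minor_def
    by (intro borel_measurable_continuous_onI continuous_on_ext_cont)
      (simp add: continuous_on_laplace_right_to_endpoint)
  have "g \<in> borel_measurable borel"
    unfolding g_def by measurable
  moreover have "AE x in lborel. x \<in> {a..b} \<longrightarrow> f x = g x"
    using AE_SUP_limsup_laplace_right_minor_eq[OF assms(1) U V less_imp_le[OF gap] LIMSEQ_inverse_real_of_nat]
    by eventually_elim (simp add: g_def)
  ultimately show ?thesis
    by (rule borel_measurable_lebesgue_on_if_AE_eq) simp
qed

end
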